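(* Let $t_1<\dots<t_N$, $q_1,\dots,q_N\ge0$, and let $\tau$ be the distribution of an offer profile subject to $((q_1,\dots,q_N),(t_1,\dots,t_N))$ (so in particular $\tau(\mathbb R)=\sum_k q_k$ and $\int t\,d\tau(t)=\sum_k q_kt_k$). Then the recursive procedure $FEASIBLE((q_1,\dots,q_N),(t_1,\dots,t_N),\tau)$ always stops, i.e. it terminates after finitely many recursive calls.
   Context: Drivers form a measure space $(I,di)$ of total mass $\sum_k q_k$; an offer profile subject to $(\mathbf q,\mathbf t)$ is a measurable $T:I\to[t_1,t_N]$ with $\int_I T_i\,di=\sum_k q_kt_k$; its distribution is $\tau(B)=di(\{i:T_i\in B\})$. The procedure $FEASIBLE(\mathbf q,\mathbf t,\tau)$, for $N\ge0$, reals $t_1<\dots<t_N$, $q_1,\dots,q_N\ge0$ and a finite Borel measure $\tau$ on $\mathbb R$, returns a Boolean computed as follows. Set $t_{N+1}=+\infty$, $q_{N+1}=0$. (1) If $\tau((-\infty,t_1))>0$, return FALSE. (2) Else if $N=0$, return TRUE. (3) Else if $\tau([t_1,t_N])=0$, return TRUE. (4) Otherwise let $n$ be the smallest integer with $\tau([t_n,t_{n+1}])>0$. (4a) If $q_1=0$, return $FEASIBLE((q_2,\dots,q_N),(t_2,\dots,t_N),\tau)$. (4b) Else if $q_{n+1}=0$ and $N>1$, return $FEASIBLE$ applied to the vectors with the $(n+1)$-th entries removed and the same $\tau$. (4c) Otherwise define, for $t\in[t_n,t_{n+1}]$, $\alpha_1(t)=\frac{t_{n+1}-t}{t_{n+1}-t_1}$,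 $\alpha_{n+1}(t)=\frac{t-t_1}{t_{n+1}-t_1}$; for $m\ge0$ let $t^m=\inf\{t:\tau([t_n,t])>m\}$, $\tau^m=\tau|_{[t_n,t^m)}+(m-\tau([t_n,t^m)))\delta_{t^m}$, $J_1(m)=\int\alpha_1\,d\tau^m$, $J_{n+1}(m)=\int\alpha_{n+1}\,d\tau^m$; let $M=\tau([t_n,t_{n+1}])$, $M_1=\sup\{m\le M:J_1(m)<q_1\}$, $M_{n+1}=\sup\{m\le M:J_{n+1}(m)<q_{n+1}\}$, $M_{min}=\min\{M_1,M_{n+1}\}$; return $FEASIBLE((q_1-J_1(M_{min}),q_2,\dots,q_n,q_{n+1}-J_{n+1}(M_{min}),q_{n+2},\dots,q_N),(t_1,\dots,t_N),\tau-\tau^{M_{min}})$. *)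

theory Defs
  imports "HOL-Analysis.Analysis"
begin

text \<open>States of the recursive procedure FEASIBLE: (q, t, tau), with vectors as lists
  (0-based: paper index k is list index k-1) and tau a finite Borel measure on the reals.\<close>
type_synonym feas_state = "real list \<times> real list \<times> real measure"

text \<open>Segment [t_(k+1), t_(k+2)] (0-based k), with t_(N+1) = +infinity.\<close>
definition seg :: "real list \<Rightarrow> nat \<Rightarrow> real set" where
  "seg ts k = (if Suc k < length ts then {ts ! k .. ts ! Suc k} else {ts ! k ..})"

definition del_at :: "nat \<Rightarrow> 'a list \<Rightarrow> 'a list" where
  "del_at k xs = take k xs @ drop (Suc k) xs"

text \<open>tau^m for base point tn: tau restricted to [tn, t^m) plus the remaining mass
  (m - tau([tn,t^m))) at t^m, where t^m = inf {t. tau([tn,t]) > m} (taken in the extended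
  reals, so that inf of the empty set is +infinity; then no point mass is added).\<close>
definition tau_trunc :: "real measure \<Rightarrow> real \<Rightarrow> real \<Rightarrow> real measure" where
  "tau_trunc tau tn m =
     (let tm = Inf {ereal t | t. measure tau {tn..t} > m};
          S = {t. tn \<le> t \<and> ereal t < tm}
      in measure_of UNIV (sets borel)
           (\<lambda>A. emeasure tau (A \<inter> S)
                + (if tm = \<infinity> \<or> tm = - \<infinity> then 0
                   else ennreal (m - measure tau S) * indicator A (real_of_ereal tm))))"

text \<open>Difference of measures tau - sg (used only for sg \<le> tau).\<close>
definition meas_diff :: "real measure \<Rightarrow> real measure \<Rightarrow> real measure" where
  "meas_diff tau sg = measure_of UNIV (sets borel) (\<lambda>A. emeasure tau A - emeasure sg A)"

text \<open>One step of FEASIBLE: None if the procedure returns a Boolean at this call,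
  Some s' if it makes the recursive call FEASIBLE(s').\<close>
definition feas_next :: "feas_state \<Rightarrow> feas_state option" where
  "feas_next s = (case s of (qs, ts, tau) \<Rightarrow>
     if emeasure tau {..< ts ! 0} > 0 then None
     else if ts = [] then None
     else if measure tau {ts ! 0 .. last ts} = 0 then None
     else
       (let n = (LEAST k. k < length ts \<and> measure tau (seg ts k) > 0) in
        if qs ! 0 = 0 then Some (tl qs, tl ts, tau)
        else if (if Suc n < length ts then qs ! Suc n else 0) = 0 \<and> length ts > 1
          then Some (del_at (Suc n) qs, del_at (Suc n) ts, tau)
        else if Suc n < length ts then
          (let t1 = ts ! 0; tn = ts ! n; tn1 = ts ! Suc n;
               a1 = (\<lambda>t. (tn1 - t) / (tn1 - t1));
               an1 = (\<lambda>t. (t - t1) / (tn1 - t1));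
               J1 = (\<lambda>m. integral\<^sup>L (tau_trunc tau tn m) a1);
               Jn1 = (\<lambda>m. integral\<^sup>L (tau_trunc tau tn m) an1);
               M = measure tau {tn .. tn1};
               M1 = Sup {m. 0 \<le> m \<and> m \<le> M \<and> J1 m < qs ! 0};
               Mn1 = Sup {m. 0 \<le> m \<and> m \<le> M \<and> Jn1 m < qs ! Suc n};
               Mmin = min M1 Mn1
           in Some (qs[0 := qs ! 0 - J1 Mmin, Suc n := qs ! Suc n - Jn1 Mmin],
                    ts, meas_diff tau (tau_trunc tau tn Mmin)))
        else None))"

definition feas_terminates :: "feas_state \<Rightarrow> bool" where
  "feas_terminates s = (\<exists>k. ((\<lambda>x. Option.bind x feas_next) ^^ k) (Some s) = None)"

end

theory Submission
  imports Defs
begin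

text \<open>Steps (4a) and (4b) shorten the data; step (4c) replaces \<open>\<tau>\<close> by \<open>\<tau> - \<tau>\<^sup>M\<close> with
  \<open>M = M\<^sub>m\<^sub>i\<^sub>n\<close> and \<open>\<tau>\<^sup>M \<le> \<tau>\<close>. Since \<open>\<tau>\<^sup>m\<close> grows with \<open>m\<close> by exactly the added mass, all of it inside
  \<open>[t\<^sub>n, t\<^sub>n\<^sub>+\<^sub>1]\<close> where \<open>\<alpha>\<^sub>1, \<alpha>\<^sub>n\<^sub>+\<^sub>1 \<in> [0, 1]\<close>, the maps \<open>J\<^sub>1, J\<^sub>n\<^sub>+\<^sub>1\<close> are nondecreasing and
  1-Lipschitz. Hence \<open>J\<^sub>1(M\<^sub>m\<^sub>i\<^sub>n) \<le> q\<^sub>1\<close> and \<open>J\<^sub>n\<^sub>+\<^sub>1(M\<^sub>m\<^sub>i\<^sub>n) \<le> q\<^sub>n\<^sub>+\<^sub>1\<close>, and either all of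
  \<open>\<tau>([t\<^sub>n, t\<^sub>n\<^sub>+\<^sub>1])\<close> is removed, so the first charged segment moves right, or one of these becomes an
  equality, so the next call is (4a) or (4b). Thus every call descends in the lexicographic order
  on (number of points, number of points minus the index of the first charged segment, whether a
  transfer is due).\<close>

lemma (in finite_measure) measure_Union_incseq_le:
  assumes "range A \<subseteq> sets M" "incseq A" "\<And>i. measure M (A i) \<le> c"
  shows "measure M (\<Union>i. A i) \<le> c"
  using finite_Lim_measure_incseq[OF assms(1,2)] by (rule LIMSEQ_le_const2) (use assms(3) in auto)

lemma (in finite_measure) measure_Inter_decseq_ge:
  assumes "range A \<subseteq> sets M" "decseq A" "\<And>i. c \<le> measure M (A i)"
  shows "c \<le> measure M (\<Inter>i. A i)"
  using finite_Lim_measure_decseq[OF assms(1,2)] by (rule LIMSEQ_le_const) (use assms(3) in auto)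

lemma integrable_mult_bounded:
  fixes g w :: "'b \<Rightarrow> real"
  assumes "integrable M g" "w \<in> borel_measurable M" "\<And>x. \<bar>w x\<bar> \<le> 1"
  shows "integrable M (\<lambda>x. g x * w x)"
  by (rule Bochner_Integration.integrable_bound[OF assms(1)])
    (use assms in \<open>auto simp: abs_mult intro!: mult_left_le\<close>)

lemma integral_mult_unit_interval_bounds:
  fixes M :: "'b measure" and g w :: "'b \<Rightarrow> real"
  assumes "integrable M g" "w \<in> borel_measurable M"
    and "\<And>x. 0 \<le> g x" "\<And>x. 0 \<le> w x" "\<And>x. w x \<le> 1"
  shows "0 \<le> integral\<^sup>L M (\<lambda>x. g x * w x)" "integral\<^sup>L M (\<lambda>x. g x * w x) \<le> integral\<^sup>L M g"
proof -
  have "integrable M (\<lambda>x. g x * w x)"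
    using assms by (intro integrable_mult_bounded) auto
  then show "0 \<le> integral\<^sup>L M (\<lambda>x. g x * w x)" "integral\<^sup>L M (\<lambda>x. g x * w x) \<le> integral\<^sup>L M g"
    using assms by (auto intro!: integral_nonneg_AE integral_mono mult_left_le)
qed

lemma Sup_strict_sublevel:
  fixes J :: "real \<Rightarrow> real"
  assumes M: "0 \<le> M" and J0: "J 0 < q"
    and lipschitz: "\<And>x y. 0 \<le> x \<Longrightarrow> x \<le> y \<Longrightarrow> y \<le> M \<Longrightarrow> J y - J x \<le> y - x"
  defines "S \<equiv> Sup {m. 0 \<le> m \<and> m \<le> M \<and> J m < q}"
  shows "0 \<le> S" "S \<le> M" "J S \<le> q" "S < M \<Longrightarrow> J S = q"
proof -
  let ?X = "{m. 0 \<le> m \<and> m \<le> M \<and> J m < q}"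
  have X0: "0 \<in> ?X" using M J0 by auto
  have bdd: "bdd_above ?X" by (rule bdd_aboveI[of _ M]) auto
  show S0: "0 \<le> S" unfolding S_def using cSup_upper[OF X0 bdd] .
  show SM: "S \<le> M" unfolding S_def using X0 by (intro cSup_least) auto
  show JS: "J S \<le> q"
  proof (rule ccontr)
    assume "\<not> J S \<le> q"
    then obtain y where y: "y \<in> ?X" "S - (J S - q) < y"
      using less_cSupD[of ?X "S - (J S - q)"] X0 unfolding S_def by force
    moreover have "y \<le> S" unfolding S_def using cSup_upper[OF y(1) bdd] .
    ultimately show False using lipschitz[of y S] SM by auto
  qed
  show "J S = q" if "S < M"
  proof (rule ccontr)
    assume "J S \<noteq> q"
    with JS have gap: "0 < q - J S" by simp
    define y where "y = min M (S + (q - J S) / 2)"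
    have Sy: "S < y" using gap that by (simp add: y_def)
    have "J y - J S \<le> y - S" using lipschitz[of S y] S0 Sy by (simp add: y_def)
    moreover have "y \<le> S + (q - J S) / 2" by (simp add: y_def)
    ultimately have "J y < q" using gap by argo
    then have "y \<in> ?X" using Sy S0 by (simp add: y_def)
    then have "y \<le> S" unfolding S_def using cSup_upper[OF _ bdd] by blast
    with Sy show False by simp
  qed
qed

text \<open>With \<open>tn = t\<^sub>n\<close>: \<open>trunc_point\<close> is \<open>t\<^sup>m\<close>, \<open>trunc_body\<close> is \<open>[t\<^sub>n, t\<^sup>m)\<close>, and
  \<open>\<tau>\<^sup>m = tau_trunc tau tn m\<close> turns out to have density \<open>trunc_density\<close> with respect to \<open>\<tau>\<close>
  (\<open>tau_trunc_eq_density\<close>), \<open>trunc_weight\<close> being the fraction of the atom \<open>\<tau>{t\<^sup>m}\<close> it takes.\<close>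
definition trunc_point :: "real measure \<Rightarrow> real \<Rightarrow> real \<Rightarrow> ereal" where
  "trunc_point tau tn m = Inf {ereal t | t. measure tau {tn..t} > m}"

definition trunc_body :: "real measure \<Rightarrow> real \<Rightarrow> real \<Rightarrow> real set" where
  "trunc_body tau tn m = {t. tn \<le> t \<and> ereal t < trunc_point tau tn m}"

text \<open>When \<open>t\<^sup>m = \<infinity>\<close> there is no atom; the dummy position \<open>tn - 1\<close> lies outside
  \<open>[tn, \<infinity>)\<close> and carries weight \<open>0\<close>.\<close>
definition trunc_atom :: "real measure \<Rightarrow> real \<Rightarrow> real \<Rightarrow> real" where
  "trunc_atom tau tn m =
     (if trunc_point tau tn m = \<infinity> then tn - 1 else real_of_ereal (trunc_point tau tn m))"

text \<open>If \<open>\<tau>{t\<^sup>m} = 0\<close> the weight is \<open>0 / 0 = 0\<close>, which is harmless: then \<open>m = \<tau>[t\<^sub>n, t\<^sup>m)\<close>.\<close>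
definition trunc_weight :: "real measure \<Rightarrow> real \<Rightarrow> real \<Rightarrow> real" where
  "trunc_weight tau tn m =
     (if trunc_point tau tn m = \<infinity> then 0
      else (m - measure tau (trunc_body tau tn m)) / measure tau {trunc_atom tau tn m})"

definition trunc_density :: "real measure \<Rightarrow> real \<Rightarrow> real \<Rightarrow> real \<Rightarrow> real" where
  "trunc_density tau tn m x =
     indicator (trunc_body tau tn m) x + trunc_weight tau tn m * indicator {trunc_atom tau tn m} x"

locale finite_borel_measure = finite_measure tau for tau :: "real measure" +
  assumes sets_tau [simp]: "sets tau = sets borel"
begin

lemma space_tau [simp]: "space tau = UNIV"
  using sets_eq_imp_space_eq[OF sets_tau] by simp

lemma borel_measurable_tau: "f \<in> borel_measurable borel \<Longrightarrow> f \<in> borel_measurable tau"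
  by (simp add: measurable_cong_sets[OF sets_tau refl])

lemma emeasure_density_le:
  assumes [measurable]: "g \<in> borel_measurable tau" and "\<And>x. g x \<le> 1" "A \<in> sets borel"
  shows "emeasure (density tau (\<lambda>x. ennreal (g x))) A \<le> emeasure tau A"
proof -
  have "emeasure (density tau (\<lambda>x. ennreal (g x))) A = (\<integral>\<^sup>+ x. ennreal (g x) * indicator A x \<partial>tau)"
    using assms(3) by (simp add: emeasure_density)
  also have "\<dots> \<le> (\<integral>\<^sup>+ x. indicator A x \<partial>tau)"
    using assms(2) by (intro nn_integral_mono) (auto simp: indicator_def)
  also have "\<dots> = emeasure tau A"
    using assms(3) by simp
  finally show ?thesis .
qed

lemma finite_borel_measure_density:
  assumes "g \<in> borel_measurable tau" "\<And>x. g x \<le> 1"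
  shows "finite_borel_measure (density tau (\<lambda>x. ennreal (g x)))"
proof -
  have "finite_measure (density tau (\<lambda>x. ennreal (g x)))"
    using emeasure_density_le[OF assms, of UNIV] by (intro finite_measureI) (auto simp: top_unique)
  then show ?thesis by (simp add: finite_borel_measure_def finite_borel_measure_axioms_def)
qed

lemma measure_density_le:
  assumes "g \<in> borel_measurable tau" "\<And>x. g x \<le> 1" "A \<in> sets borel"
  shows "measure (density tau (\<lambda>x. ennreal (g x))) A \<le> measure tau A"
proof -
  interpret D: finite_borel_measure "density tau (\<lambda>x. ennreal (g x))"
    using finite_borel_measure_density assms by blast
  show ?thesis
    using emeasure_density_le[OF assms] by (simp add: D.emeasure_eq_measure emeasure_eq_measure)
qed

lemma measure_density_eq_integral:
  assumes [measurable]: "g \<in> borel_measurable tau" "\<And>x. 0 \<le> g x" "\<And>x. g x \<le> 1" "A \<in> sets borel"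
  shows "measure (density tau (\<lambda>x. ennreal (g x))) A = (\<integral>x. g x * indicator A x \<partial>tau)"
proof -
  interpret D: finite_borel_measure "density tau (\<lambda>x. ennreal (g x))"
    using finite_borel_measure_density assms by blast
  have [measurable]: "A \<in> sets tau" using assms(4) by simp
  have "measure (density tau (\<lambda>x. ennreal (g x))) A = (\<integral>x. indicator A x \<partial>density tau (\<lambda>x. ennreal (g x)))"
    by simp
  also have "\<dots> = (\<integral>x. g x * indicator A x \<partial>tau)"
    using assms(2) by (subst integral_density) auto
  finally show ?thesis .
qed

context
  fixes tn :: real
begin

lemma trunc_point_ge: "0 \<le> m \<Longrightarrow> ereal tn \<le> trunc_point tau tn m"
  unfolding trunc_point_def
proof (rule Inf_greatest, clarify)
  fix t assume "0 \<le> m" "m < measure tau {tn..t}"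
  then show "ereal tn \<le> ereal t" by (cases "tn \<le> t") auto
qed

lemma trunc_point_mono: "m \<le> m' \<Longrightarrow> trunc_point tau tn m \<le> trunc_point tau tn m'"
  unfolding trunc_point_def by (rule Inf_superset_mono) auto

lemma measure_below_trunc_point:
  assumes "ereal t < trunc_point tau tn m" shows "measure tau {tn..t} \<le> m"
proof (rule ccontr)
  assume "\<not> measure tau {tn..t} \<le> m"
  then have "trunc_point tau tn m \<le> ereal t" unfolding trunc_point_def by (intro Inf_lower) auto
  with assms show False by simp
qed

lemma trunc_point_real:
  assumes "0 \<le> m" "trunc_point tau tn m \<noteq> \<infinity>"
  shows "trunc_point tau tn m = ereal (trunc_atom tau tn m)"
  using trunc_point_ge[OF assms(1)] assms(2) unfolding trunc_atom_def
  by (cases "trunc_point tau tn m") auto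

lemma trunc_body_eq:
  assumes "0 \<le> m"
  shows "trunc_body tau tn m =
    (if trunc_point tau tn m = \<infinity> then {tn..} else {tn..<trunc_atom tau tn m})"
  using trunc_point_real[OF assms] unfolding trunc_body_def by auto

lemma trunc_body_borel [measurable]: "0 \<le> m \<Longrightarrow> trunc_body tau tn m \<in> sets borel"
  by (simp add: trunc_body_eq)

lemma trunc_atom_notin_body: "0 \<le> m \<Longrightarrow> trunc_atom tau tn m \<notin> trunc_body tau tn m"
  by (simp add: trunc_body_eq trunc_atom_def)

lemma trunc_atom_ge:
  assumes "0 \<le> m" "trunc_point tau tn m \<noteq> \<infinity>" shows "tn \<le> trunc_atom tau tn m"
  using trunc_point_ge[OF assms(1)] unfolding trunc_point_real[OF assms] by simp

lemma measure_trunc_body_le: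
  assumes "0 \<le> m" shows "measure tau (trunc_body tau tn m) \<le> m"
proof (cases "trunc_point tau tn m = \<infinity>")
  case True
  have "trunc_body tau tn m = (\<Union>i. {tn..tn + real i})"
    by (auto simp: trunc_body_eq[OF assms] True) (metis add.commute diff_le_eq real_arch_simple)
  moreover have "measure tau (\<Union>i. {tn..tn + real i}) \<le> m"
    by (rule measure_Union_incseq_le) (auto simp: incseq_def True intro!: measure_below_trunc_point)
  ultimately show ?thesis by simp
next
  case False
  define p where "p = trunc_atom tau tn m"
  have "trunc_body tau tn m = (\<Union>i. {tn..p - 1 / Suc i})"
  proof (intro set_eqI iffI)
    fix x assume "x \<in> trunc_body tau tn m"
    then have x: "tn \<le> x" "x < p" by (auto simp: trunc_body_eq[OF assms] False p_def)
    then obtain i where "1 / Suc i < p - x"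
      by (metis diff_gt_0_iff_gt nat_approx_posE)
    with x show "x \<in> (\<Union>i. {tn..p - 1 / Suc i})" by (auto intro!: exI[of _ i])
  next
    fix x assume "x \<in> (\<Union>i. {tn..p - 1 / Suc i})"
    then obtain i where "tn \<le> x" "x \<le> p - 1 / Suc i" by auto
    moreover have "1 / Suc i > 0" by simp
    ultimately have "tn \<le> x" "x < p" by linarith+
    then show "x \<in> trunc_body tau tn m"
      by (simp add: trunc_body_eq[OF assms] False p_def)
  qed
  moreover have "measure tau (\<Union>i. {tn..p - 1 / Suc i}) \<le> m"
  proof (rule measure_Union_incseq_le)
    show "incseq (\<lambda>i. {tn..p - 1 / real (Suc i)})"
      unfolding incseq_def
      by (intro allI impI atLeastatMost_subset_iff[THEN iffD2] disjI2) (auto simp: frac_le)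
    have "ereal (p - 1 / Suc i) < trunc_point tau tn m" for i
      using trunc_point_real[OF assms False] by (simp add: p_def)
    then show "measure tau {tn..p - 1 / real (Suc i)} \<le> m" for i
      by (rule measure_below_trunc_point)
  qed auto
  ultimately show ?thesis by simp
qed

lemma measure_above_trunc_point:
  assumes "trunc_point tau tn m < ereal t" shows "m < measure tau {tn..t}"
proof -
  obtain s where "m < measure tau {tn..s}" "s < t"
    using assms unfolding trunc_point_def by (auto simp: Inf_less_iff)
  moreover have "measure tau {tn..s} \<le> measure tau {tn..t}"
    using \<open>s < t\<close> by (intro finite_measure_mono) auto
  ultimately show ?thesis by simp
qed

lemma measure_upto_trunc_atom_ge:
  assumes "0 \<le> m" "trunc_point tau tn m \<noteq> \<infinity>"
  shows "m \<le> measure tau {tn..trunc_atom tau tn m}"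
proof -
  define p where "p = trunc_atom tau tn m"
  have "{tn..p} = (\<Inter>i. {tn..p + 1 / Suc i})"
  proof (intro set_eqI iffI)
    fix x assume x: "x \<in> (\<Inter>i. {tn..p + 1 / Suc i})"
    have "x \<le> p"
    proof (rule ccontr)
      assume "\<not> x \<le> p"
      then obtain i where "1 / Suc i < x - p"
        by (metis diff_gt_0_iff_gt nat_approx_posE not_le)
      moreover have "x \<in> {tn..p + 1 / Suc i}" by (rule INT_D[OF x]) simp
      ultimately show False by simp
    qed
    with x show "x \<in> {tn..p}" by auto
  qed (auto intro: order.trans[of _ p])
  moreover have "m \<le> measure tau (\<Inter>i. {tn..p + 1 / Suc i})"
  proof (rule measure_Inter_decseq_ge)
    show "decseq (\<lambda>i. {tn..p + 1 / real (Suc i)})"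
      unfolding decseq_def
      by (intro allI impI atLeastatMost_subset_iff[THEN iffD2] disjI2) (auto simp: frac_le)
    have "trunc_point tau tn m < ereal (p + 1 / Suc i)" for i
      using trunc_point_real[OF assms] by (simp add: p_def)
    then show "m \<le> measure tau {tn..p + 1 / real (Suc i)}" for i
      by (intro less_imp_le measure_above_trunc_point)
  qed auto
  ultimately show ?thesis by (simp add: p_def)
qed

lemma trunc_mass_le_atom:
  assumes "0 \<le> m" "trunc_point tau tn m \<noteq> \<infinity>"
  shows "m - measure tau (trunc_body tau tn m) \<le> measure tau {trunc_atom tau tn m}"
proof -
  have "{tn..trunc_atom tau tn m} = trunc_body tau tn m \<union> {trunc_atom tau tn m}"
    using trunc_atom_ge[OF assms] by (auto simp: trunc_body_eq[OF assms(1)] assms(2))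
  moreover have "measure tau (trunc_body tau tn m \<union> {trunc_atom tau tn m})
      = measure tau (trunc_body tau tn m) + measure tau {trunc_atom tau tn m}"
    using trunc_atom_notin_body[OF assms(1)] assms(1) by (intro finite_measure_Union) auto
  ultimately have "measure tau {tn..trunc_atom tau tn m}
      = measure tau (trunc_body tau tn m) + measure tau {trunc_atom tau tn m}" by simp
  with measure_upto_trunc_atom_ge[OF assms] show ?thesis by simp
qed

lemma trunc_weight_nonneg: "0 \<le> m \<Longrightarrow> 0 \<le> trunc_weight tau tn m"
  unfolding trunc_weight_def using measure_trunc_body_le by auto

lemma trunc_weight_le_1:
  assumes "0 \<le> m" shows "trunc_weight tau tn m \<le> 1"
proof (cases "trunc_point tau tn m = \<infinity> \<or> measure tau {trunc_atom tau tn m} = 0")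
  case False
  then have "0 < measure tau {trunc_atom tau tn m}"
    using measure_nonneg[of tau "{trunc_atom tau tn m}"] by linarith
  with False trunc_mass_le_atom[OF assms] show ?thesis
    unfolding trunc_weight_def by (simp add: divide_le_eq_1)
qed (auto simp: trunc_weight_def)

lemma trunc_weight_mult:
  assumes "0 \<le> m" "trunc_point tau tn m \<noteq> \<infinity>"
  shows "trunc_weight tau tn m * measure tau {trunc_atom tau tn m} = m - measure tau (trunc_body tau tn m)"
proof (cases "measure tau {trunc_atom tau tn m} = 0")
  case True
  with trunc_mass_le_atom[OF assms] measure_trunc_body_le[OF assms(1)] show ?thesis by simp
qed (simp add: trunc_weight_def assms(2))

lemma trunc_density_nonneg: "0 \<le> m \<Longrightarrow> 0 \<le> trunc_density tau tn m x"
  unfolding trunc_density_def using trunc_weight_nonneg by simp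

lemma trunc_density_le_1: "0 \<le> m \<Longrightarrow> trunc_density tau tn m x \<le> 1"
  unfolding trunc_density_def using trunc_weight_le_1 trunc_atom_notin_body[of m]
  by (cases "x \<in> trunc_body tau tn m"; cases "x = trunc_atom tau tn m") auto

lemma trunc_density_measurable [measurable]:
  "0 \<le> m \<Longrightarrow> trunc_density tau tn m \<in> borel_measurable tau"
  unfolding trunc_density_def by (intro borel_measurable_tau) measurable

lemma integrable_trunc_density: "0 \<le> m \<Longrightarrow> integrable tau (trunc_density tau tn m)"
  using trunc_density_nonneg trunc_density_le_1 trunc_density_measurable
  by (intro integrable_const_bound[where B=1]) auto

lemma emeasure_density_trunc_density:
  assumes m: "0 \<le> m" and A [measurable]: "A \<in> sets borel"
  shows "emeasure (density tau (\<lambda>x. ennreal (trunc_density tau tn m x))) A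
    = emeasure tau (A \<inter> trunc_body tau tn m)
      + ennreal (trunc_weight tau tn m) * emeasure tau (A \<inter> {trunc_atom tau tn m})"
proof -
  have "ennreal (trunc_density tau tn m x) * indicator A x
      = indicator (A \<inter> trunc_body tau tn m) x
        + ennreal (trunc_weight tau tn m) * indicator (A \<inter> {trunc_atom tau tn m}) x" for x
    using trunc_atom_notin_body[OF m]
    by (auto simp: trunc_density_def indicator_def)
  then have "emeasure (density tau (\<lambda>x. ennreal (trunc_density tau tn m x))) A
      = (\<integral>\<^sup>+ x. indicator (A \<inter> trunc_body tau tn m) x
           + ennreal (trunc_weight tau tn m) * indicator (A \<inter> {trunc_atom tau tn m}) x \<partial>tau)"
    using m by (simp add: emeasure_density)
  also have "\<dots> = emeasure tau (A \<inter> trunc_body tau tn m)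
      + ennreal (trunc_weight tau tn m) * emeasure tau (A \<inter> {trunc_atom tau tn m})"
  proof -
    have S: "A \<inter> trunc_body tau tn m \<in> sets tau" "A \<inter> {trunc_atom tau tn m} \<in> sets tau"
      using A trunc_body_borel[OF m] by auto
    have m1: "(\<lambda>x. indicator (A \<inter> trunc_body tau tn m) x :: ennreal) \<in> borel_measurable tau"
      using S(1) by (rule borel_measurable_indicator)
    have m2: "(\<lambda>x. ennreal (trunc_weight tau tn m) * indicator (A \<inter> {trunc_atom tau tn m}) x)
        \<in> borel_measurable tau"
      by (rule borel_measurable_times_ennreal) (auto intro: borel_measurable_indicator S(2))
    show ?thesis
      by (simp only: nn_integral_add[OF m1 m2] nn_integral_cmult_indicator[OF S(2)]
          nn_integral_indicator[OF S(1)])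
  qed
  finally show ?thesis .
qed

lemma tau_trunc_eq_density:
  assumes m: "0 \<le> m"
  shows "tau_trunc tau tn m = density tau (\<lambda>x. ennreal (trunc_density tau tn m x))"
proof -
  let ?D = "density tau (\<lambda>x. ennreal (trunc_density tau tn m x))"
  let ?p = "trunc_point tau tn m"
  have "tau_trunc tau tn m = measure_of UNIV (sets borel) (emeasure ?D)"
    unfolding tau_trunc_def Let_def trunc_point_def[symmetric] trunc_body_def[symmetric]
  proof (rule measure_of_eq)
    fix A :: "real set" assume "A \<in> sigma_sets UNIV (sets borel)"
    then have A: "A \<in> sets borel" by (simp add: sets.sigma_sets_eq[of borel, simplified])
    have "ennreal (trunc_weight tau tn m) * emeasure tau (A \<inter> {trunc_atom tau tn m})
        = (if ?p = \<infinity> \<or> ?p = - \<infinity> then 0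
           else ennreal (m - measure tau (trunc_body tau tn m)) * indicator A (real_of_ereal ?p))"
    proof (cases "?p = \<infinity>")
      case False
      have "?p \<noteq> - \<infinity>" using trunc_point_ge[OF m] by auto
      moreover have "ennreal (trunc_weight tau tn m) * emeasure tau {trunc_atom tau tn m}
          = ennreal (m - measure tau (trunc_body tau tn m))"
        using trunc_weight_nonneg[OF m] trunc_weight_mult[OF m False]
        by (simp add: emeasure_eq_measure flip: ennreal_mult)
      ultimately show ?thesis
        using False by (cases "trunc_atom tau tn m \<in> A") (auto simp: trunc_atom_def)
    qed (simp add: trunc_weight_def)
    then show "emeasure tau (A \<inter> trunc_body tau tn m)
        + (if ?p = \<infinity> \<or> ?p = - \<infinity> then 0
           else ennreal (m - measure tau (trunc_body tau tn m)) * indicator A (real_of_ereal ?p))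
      = emeasure ?D A"
      by (simp add: emeasure_density_trunc_density[OF m A])
  qed auto
  also have "\<dots> = ?D"
    using measure_of_of_measure[of ?D] by simp
  finally show ?thesis .
qed

lemma trunc_density_on_body: "0 \<le> m \<Longrightarrow> x \<in> trunc_body tau tn m \<Longrightarrow> trunc_density tau tn m x = 1"
  using trunc_atom_notin_body[of m] unfolding trunc_density_def
  by (cases "x = trunc_atom tau tn m") auto

lemma trunc_density_off:
  "x \<notin> trunc_body tau tn m \<Longrightarrow> x \<noteq> trunc_atom tau tn m \<Longrightarrow> trunc_density tau tn m x = 0"
  unfolding trunc_density_def by auto

lemma trunc_density_support:
  assumes "0 \<le> m" "trunc_point tau tn m \<noteq> \<infinity>" "trunc_density tau tn m x \<noteq> 0"
  shows "tn \<le> x" "ereal x \<le> trunc_point tau tn m"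
proof -
  have "x \<in> trunc_body tau tn m \<or> x = trunc_atom tau tn m"
    using trunc_density_off assms(3) by blast
  then show "tn \<le> x" "ereal x \<le> trunc_point tau tn m"
    using trunc_atom_ge[OF assms(1,2)] trunc_point_real[OF assms(1,2)]
    by (auto simp: trunc_body_def)
qed

lemma integral_trunc_density:
  assumes m: "0 \<le> m" and "m \<le> measure tau {tn..}"
  shows "(\<integral>x. trunc_density tau tn m x \<partial>tau) = m"
proof -
  have "(\<integral>x. trunc_density tau tn m x \<partial>tau) = (\<integral>x. indicator (trunc_body tau tn m) x \<partial>tau)
      + (\<integral>x. trunc_weight tau tn m * indicator {trunc_atom tau tn m} x \<partial>tau)"
    unfolding trunc_density_def using trunc_body_borel[OF m]
    by (intro Bochner_Integration.integral_add integrable_mult_right integrable_real_indicator)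
      (auto simp: emeasure_eq_measure)
  also have "\<dots> = measure tau (trunc_body tau tn m) + trunc_weight tau tn m * measure tau {trunc_atom tau tn m}"
    by simp
  also have "\<dots> = m"
  proof (cases "trunc_point tau tn m = \<infinity>")
    case True
    then show ?thesis
      using measure_trunc_body_le[OF m] assms(2) by (simp add: trunc_body_eq[OF m] trunc_weight_def)
  qed (simp add: trunc_weight_mult[OF m])
  finally show ?thesis .
qed

lemma trunc_density_mono:
  assumes m: "0 \<le> m" and mm: "m \<le> m'"
  shows "trunc_density tau tn m x \<le> trunc_density tau tn m' x"
proof (cases "trunc_point tau tn m = trunc_point tau tn m'")
  case True
  then have "trunc_body tau tn m = trunc_body tau tn m'" "trunc_atom tau tn m = trunc_atom tau tn m'"
    unfolding trunc_body_def trunc_atom_def by auto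
  moreover from this True mm have "trunc_weight tau tn m \<le> trunc_weight tau tn m'"
    unfolding trunc_weight_def by (auto intro!: divide_right_mono)
  ultimately show ?thesis unfolding trunc_density_def by (auto simp: indicator_def)
next
  case False
  then have lt: "trunc_point tau tn m < trunc_point tau tn m'"
    using trunc_point_mono[OF mm] by simp
  show ?thesis
  proof (cases "trunc_density tau tn m x = 0")
    case nonzero: False
    have "trunc_point tau tn m \<noteq> \<infinity>" using lt by auto
    with m nonzero lt have "x \<in> trunc_body tau tn m'"
      using trunc_density_support by (fastforce simp: trunc_body_def)
    then show ?thesis
      using trunc_density_on_body[of m'] trunc_density_le_1[OF m] m mm by simp
  qed (use trunc_density_nonneg m mm in auto)
qed

text \<open>Either \<open>t\<^sup>m \<le> tn1\<close>, or \<open>[tn, tn1]\<close> lies in the body and already carries all the mass \<open>m\<close>.\<close>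
lemma trunc_density_vanishes_outside:
  assumes m: "0 \<le> m" and mM: "m \<le> measure tau {tn..tn1}"
  shows "AE x in tau. x \<notin> {tn..tn1} \<longrightarrow> trunc_density tau tn m x = 0"
proof (cases "trunc_point tau tn m \<le> ereal tn1")
  case True
  then have "trunc_point tau tn m \<noteq> \<infinity>" by auto
  with True have "x \<notin> {tn..tn1} \<longrightarrow> trunc_density tau tn m x = 0" for x
    using trunc_density_support[OF m] by (meson atLeastAtMost_iff ereal_less_eq(3) order.trans)
  then show ?thesis by simp
next
  case False
  have sub: "{tn..tn1} \<subseteq> trunc_body tau tn m"
  proof
    fix x assume x: "x \<in> {tn..tn1}"
    then have "ereal x \<le> ereal tn1" by simp
    also have "\<dots> < trunc_point tau tn m" using False by simp
    finally show "x \<in> trunc_body tau tn m" using x by (simp add: trunc_body_def)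
  qed
  then have "measure tau {tn..tn1} \<le> measure tau (trunc_body tau tn m)"
    using trunc_body_borel[OF m] by (intro finite_measure_mono) auto
  then have body: "measure tau (trunc_body tau tn m) = m" "measure tau {tn..tn1} = m"
    using measure_trunc_body_le[OF m] mM by auto
  then have "measure tau (trunc_body tau tn m - {tn..tn1}) = 0"
    using sub trunc_body_borel[OF m] by (subst finite_measure_Diff) auto
  then have null: "trunc_body tau tn m - {tn..tn1} \<in> null_sets tau"
    using trunc_body_borel[OF m] by (auto simp: emeasure_eq_measure intro!: null_setsI)
  have "trunc_weight tau tn m = 0" unfolding trunc_weight_def using body by simp
  then show ?thesis
    by (intro AE_I'[OF null]) (auto simp: trunc_density_def indicator_def)
qed

text \<open>\<open>meas_diff\<close> is built by \<open>measure_of\<close> from a difference of set functions; it is a measure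
  here only because \<open>\<tau>\<^sup>m\<close> has a density at most \<open>1\<close> with respect to \<open>\<tau>\<close>.\<close>
lemma meas_diff_tau_trunc_eq_density:
  assumes m: "0 \<le> m"
  shows "meas_diff tau (tau_trunc tau tn m) = density tau (\<lambda>x. ennreal (1 - trunc_density tau tn m x))"
proof -
  let ?F = "density tau (\<lambda>x. ennreal (trunc_density tau tn m x))"
  let ?D = "density tau (\<lambda>x. ennreal (1 - trunc_density tau tn m x))"
  have "meas_diff tau (tau_trunc tau tn m) = measure_of UNIV (sets borel) (emeasure ?D)"
    unfolding meas_diff_def tau_trunc_eq_density[OF m]
  proof (rule measure_of_eq)
    fix A :: "real set" assume "A \<in> sigma_sets UNIV (sets borel)"
    then have A: "A \<in> sets tau" by (simp add: sets.sigma_sets_eq[of borel, simplified])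
    have [measurable]: "trunc_density tau tn m \<in> borel_measurable tau"
      by (rule trunc_density_measurable[OF m])
    have one: "(\<lambda>x. ennreal (trunc_density tau tn m x) + ennreal (1 - trunc_density tau tn m x)) = (\<lambda>x. 1)"
      using trunc_density_nonneg[OF m] trunc_density_le_1[OF m] by (auto simp flip: ennreal_plus)
    have sum: "emeasure tau A = emeasure ?F A + emeasure ?D A"
      using emeasure_density_add[OF A, of "\<lambda>x. ennreal (trunc_density tau tn m x)"
          "\<lambda>x. ennreal (1 - trunc_density tau tn m x)"]
      by (simp only: one density_1) measurable
    have fin: "emeasure ?F A \<noteq> top"
      using emeasure_density_le[OF trunc_density_measurable[OF m] trunc_density_le_1[OF m], of A] A
      by (auto simp: emeasure_eq_measure top_unique)
    show "emeasure tau A - emeasure ?F A = emeasure ?D A"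
      unfolding sum by (rule ennreal_add_diff_cancel_left[OF fin])
  qed auto
  also have "\<dots> = ?D"
    using measure_of_of_measure[of ?D] by simp
  finally show ?thesis .
qed

lemma finite_borel_measure_meas_diff_tau_trunc:
  "0 \<le> m \<Longrightarrow> finite_borel_measure (meas_diff tau (tau_trunc tau tn m))"
  unfolding meas_diff_tau_trunc_eq_density
  by (intro finite_borel_measure_density borel_measurable_diff borel_measurable_const
      trunc_density_measurable) (auto simp: trunc_density_nonneg)

lemma measure_meas_diff_tau_trunc_le:
  "0 \<le> m \<Longrightarrow> A \<in> sets borel \<Longrightarrow> measure (meas_diff tau (tau_trunc tau tn m)) A \<le> measure tau A"
  unfolding meas_diff_tau_trunc_eq_density
  by (intro measure_density_le borel_measurable_diff borel_measurable_const
      trunc_density_measurable) (auto simp: trunc_density_nonneg)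

lemma measure_meas_diff_tau_trunc_full:
  "measure (meas_diff tau (tau_trunc tau tn (measure tau {tn..tn1}))) {tn..tn1} = 0"
proof -
  define M where "M = measure tau {tn..tn1}"
  have M: "0 \<le> M" "M \<le> measure tau {tn..}"
    unfolding M_def by (auto intro: finite_measure_mono)
  have "measure (meas_diff tau (tau_trunc tau tn M)) {tn..tn1}
      = (\<integral>x. (1 - trunc_density tau tn M x) * indicator {tn..tn1} x \<partial>tau)"
  proof -
    have [measurable]: "trunc_density tau tn M \<in> borel_measurable tau"
      by (rule trunc_density_measurable[OF M(1)])
    have "0 \<le> trunc_density tau tn M x" "trunc_density tau tn M x \<le> 1" for x
      by (simp_all add: trunc_density_nonneg[OF M(1)] trunc_density_le_1[OF M(1)])
    then show ?thesis
      unfolding meas_diff_tau_trunc_eq_density[OF M(1)] by (intro measure_density_eq_integral) auto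
  qed
  also have "\<dots> = M - (\<integral>x. trunc_density tau tn M x * indicator {tn..tn1} x \<partial>tau)"
  proof -
    have "integrable tau (indicator {tn..tn1} :: real \<Rightarrow> real)"
      by (intro integrable_real_indicator) (auto simp: emeasure_eq_measure)
    moreover have "integrable tau (\<lambda>x. trunc_density tau tn M x * indicator {tn..tn1} x)"
      by (intro integrable_mult_bounded integrable_trunc_density M(1) borel_measurable_indicator)
        (auto simp: indicator_def)
    ultimately show ?thesis
      by (simp add: left_diff_distrib Bochner_Integration.integral_diff M_def)
  qed
  also have "(\<integral>x. trunc_density tau tn M x * indicator {tn..tn1} x \<partial>tau) = M"
  proof -
    have "(\<integral>x. trunc_density tau tn M x * indicator {tn..tn1} x \<partial>tau) = (\<integral>x. trunc_density tau tn M x \<partial>tau)"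
    proof (rule integral_cong_AE)
      show "(\<lambda>x. trunc_density tau tn M x * indicator {tn..tn1} x) \<in> borel_measurable tau"
        "trunc_density tau tn M \<in> borel_measurable tau"
        using M(1) by (auto intro!: borel_measurable_times borel_measurable_indicator trunc_density_measurable)
      have "M \<le> measure tau {tn..tn1}" by (simp add: M_def)
      from trunc_density_vanishes_outside[OF M(1) this]
      show "AE x in tau. trunc_density tau tn M x * indicator {tn..tn1} x = trunc_density tau tn M x"
        by eventually_elim (auto simp: indicator_def)
    qed
    also have "\<dots> = M" using integral_trunc_density M by blast
    finally show ?thesis .
  qed
  finally show ?thesis by (simp add: M_def)
qed

end

context
  fixes tn tn1 :: real and a :: "real \<Rightarrow> real"
  assumes a_borel [measurable]: "a \<in> borel_measurable borel"
    and a_unit: "\<And>x. x \<in> {tn..tn1} \<Longrightarrow> 0 \<le> a x \<and> a x \<le> 1"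
begin

private definition cutoff :: "real \<Rightarrow> real" where
  "cutoff x = a x * indicator {tn..tn1} x"

private lemma cutoff_measurable [measurable]: "cutoff \<in> borel_measurable tau"
  unfolding cutoff_def by (intro borel_measurable_tau) measurable

private lemma cutoff_unit: "0 \<le> cutoff x" "cutoff x \<le> 1"
  using a_unit[of x] by (auto simp: cutoff_def indicator_def)

private lemma integral_tau_trunc:
  assumes m: "0 \<le> m" and mM: "m \<le> measure tau {tn..tn1}"
  shows "(\<integral>x. a x \<partial>tau_trunc tau tn m) = (\<integral>x. trunc_density tau tn m x * cutoff x \<partial>tau)"
proof -
  have "(\<integral>x. a x \<partial>tau_trunc tau tn m) = (\<integral>x. trunc_density tau tn m x *\<^sub>R a x \<partial>tau)"
    unfolding tau_trunc_eq_density[OF m] using trunc_density_nonneg[OF m]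
    by (intro integral_density trunc_density_measurable[OF m] borel_measurable_tau) auto
  also have "\<dots> = (\<integral>x. trunc_density tau tn m x * cutoff x \<partial>tau)"
  proof (rule integral_cong_AE)
    have [measurable]: "trunc_density tau tn m \<in> borel_measurable tau" "a \<in> borel_measurable tau"
      by (simp_all add: trunc_density_measurable[OF m] borel_measurable_tau)
    show "(\<lambda>x. trunc_density tau tn m x *\<^sub>R a x) \<in> borel_measurable tau"
      "(\<lambda>x. trunc_density tau tn m x * cutoff x) \<in> borel_measurable tau"
      by measurable
    show "AE x in tau. trunc_density tau tn m x *\<^sub>R a x = trunc_density tau tn m x * cutoff x"
      using trunc_density_vanishes_outside[OF m mM] by eventually_elim (auto simp: cutoff_def)
  qed
  finally show ?thesis .
qed

lemma integral_tau_trunc_increment: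
  assumes m: "0 \<le> m" and mm: "m \<le> m'" and mM: "m' \<le> measure tau {tn..tn1}"
  shows "(\<integral>x. a x \<partial>tau_trunc tau tn m) \<le> (\<integral>x. a x \<partial>tau_trunc tau tn m')"
    and "(\<integral>x. a x \<partial>tau_trunc tau tn m') - (\<integral>x. a x \<partial>tau_trunc tau tn m) \<le> m' - m"
proof -
  have m': "0 \<le> m'" using m mm by simp
  let ?g = "\<lambda>x. trunc_density tau tn m' x - trunc_density tau tn m x"
  have int_g: "integrable tau ?g"
    using integrable_trunc_density[OF m] integrable_trunc_density[OF m'] by simp
  have "(\<integral>x. a x \<partial>tau_trunc tau tn m') - (\<integral>x. a x \<partial>tau_trunc tau tn m) = (\<integral>x. ?g x * cutoff x \<partial>tau)"
    using m mm mM cutoff_unit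
    by (simp add: integral_tau_trunc left_diff_distrib Bochner_Integration.integral_diff
        integrable_mult_bounded integrable_trunc_density)
  moreover have "(\<integral>x. ?g x \<partial>tau) = m' - m"
  proof -
    have "measure tau {tn..tn1} \<le> measure tau {tn..}"
      by (intro finite_measure_mono) auto
    then show ?thesis
      using m mm mM
      by (simp add: Bochner_Integration.integral_diff integrable_trunc_density integral_trunc_density)
  qed
  moreover note integral_mult_unit_interval_bounds[OF int_g cutoff_measurable _ cutoff_unit]
  ultimately show "(\<integral>x. a x \<partial>tau_trunc tau tn m) \<le> (\<integral>x. a x \<partial>tau_trunc tau tn m')"
    and "(\<integral>x. a x \<partial>tau_trunc tau tn m') - (\<integral>x. a x \<partial>tau_trunc tau tn m) \<le> m' - m"
    using trunc_density_mono[OF m mm] by auto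
qed

lemma integral_tau_trunc_0: "(\<integral>x. a x \<partial>tau_trunc tau tn 0) = 0"
proof -
  have int: "integrable tau (trunc_density tau tn 0)" and nonneg: "\<And>x. 0 \<le> trunc_density tau tn 0 x"
    by (simp_all add: integrable_trunc_density trunc_density_nonneg)
  have "(\<integral>x. trunc_density tau tn 0 x \<partial>tau) = 0"
    by (rule integral_trunc_density) auto
  moreover note integral_mult_unit_interval_bounds[OF int cutoff_measurable nonneg cutoff_unit]
  moreover have "(\<integral>x. a x \<partial>tau_trunc tau tn 0) = (\<integral>x. trunc_density tau tn 0 x * cutoff x \<partial>tau)"
    by (rule integral_tau_trunc) auto
  ultimately show ?thesis by linarith
qed

end

lemma transfer_step:
  fixes t1 tn tn1 q1 q2 :: real
  assumes t: "t1 \<le> tn" "tn < tn1" and q: "0 < q1" "0 < q2"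
  defines "J1 \<equiv> \<lambda>m. \<integral>t. (tn1 - t) / (tn1 - t1) \<partial>tau_trunc tau tn m"
    and "J2 \<equiv> \<lambda>m. \<integral>t. (t - t1) / (tn1 - t1) \<partial>tau_trunc tau tn m"
    and "M \<equiv> measure tau {tn..tn1}"
  defines "Mm \<equiv> min (Sup {m. 0 \<le> m \<and> m \<le> M \<and> J1 m < q1}) (Sup {m. 0 \<le> m \<and> m \<le> M \<and> J2 m < q2})"
  shows "0 \<le> Mm" "J1 Mm \<le> q1" "J2 Mm \<le> q2"
    and "measure (meas_diff tau (tau_trunc tau tn Mm)) {tn..tn1} = 0 \<or> J1 Mm = q1 \<or> J2 Mm = q2"
proof -
  have "0 \<le> M" by (simp add: M_def)
  have weights: "0 \<le> (tn1 - x) / (tn1 - t1) \<and> (tn1 - x) / (tn1 - t1) \<le> 1"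
      "0 \<le> (x - t1) / (tn1 - t1) \<and> (x - t1) / (tn1 - t1) \<le> 1" if "x \<in> {tn..tn1}" for x
    using that t by auto
  have borel: "(\<lambda>t. (tn1 - t) / (tn1 - t1)) \<in> borel_measurable borel"
      "(\<lambda>t. (t - t1) / (tn1 - t1)) \<in> borel_measurable borel"
    by simp_all
  have inc1: "J1 x \<le> J1 y" "J1 y - J1 x \<le> y - x" if "0 \<le> x" "x \<le> y" "y \<le> M" for x y
    using integral_tau_trunc_increment[OF borel(1) _ that[unfolded M_def]] weights(1)
    unfolding J1_def by auto
  have inc2: "J2 x \<le> J2 y" "J2 y - J2 x \<le> y - x" if "0 \<le> x" "x \<le> y" "y \<le> M" for x y
    using integral_tau_trunc_increment[OF borel(2) _ that[unfolded M_def]] weights(2)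
    unfolding J2_def by auto
  have "J1 0 = 0"
    unfolding J1_def by (rule integral_tau_trunc_0[OF borel(1) weights(1)])
  moreover have "J2 0 = 0"
    unfolding J2_def by (rule integral_tau_trunc_0[OF borel(2) weights(2)])
  ultimately have "J1 0 < q1" "J2 0 < q2" using q by simp_all
  note S1 = Sup_strict_sublevel[OF \<open>0 \<le> M\<close> \<open>J1 0 < q1\<close> inc1(2), simplified]
  note S2 = Sup_strict_sublevel[OF \<open>0 \<le> M\<close> \<open>J2 0 < q2\<close> inc2(2), simplified]
  show Mm0: "0 \<le> Mm" unfolding Mm_def using S1(1) S2(1) by simp
  have "Mm \<le> Sup {m. 0 \<le> m \<and> m \<le> M \<and> J1 m < q1}" "Mm \<le> Sup {m. 0 \<le> m \<and> m \<le> M \<and> J2 m < q2}"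
    by (simp_all add: Mm_def)
  then show "J1 Mm \<le> q1" "J2 Mm \<le> q2"
    using inc1(1)[OF Mm0 _ S1(2)] inc2(1)[OF Mm0 _ S2(2)] S1(3) S2(3) by force+
  show "measure (meas_diff tau (tau_trunc tau tn Mm)) {tn..tn1} = 0 \<or> J1 Mm = q1 \<or> J2 Mm = q2"
  proof (cases "Mm = M")
    case True
    then show ?thesis using measure_meas_diff_tau_trunc_full by (simp add: M_def)
  next
    case False
    then have "Mm < M" unfolding Mm_def using S1(2) S2(2) by linarith
    then show ?thesis unfolding Mm_def using S1(4) S2(4) by (auto simp: min_def)
  qed
qed

end

lemma seg_borel [measurable]: "seg ts k \<in> sets borel"
  unfolding seg_def by simp

lemma seg_cover:
  assumes "ts \<noteq> []" "x \<in> {ts ! 0 .. last ts}"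
  shows "\<exists>k<length ts. (1 < length ts \<longrightarrow> Suc k < length ts) \<and> x \<in> seg ts k"
proof (cases "length ts = 1")
  case True
  then show ?thesis using assms by (auto simp: seg_def intro!: exI[of _ 0])
next
  case False
  with assms(1) have len: "1 < length ts" by (cases ts) auto
  define K where "K = {k. Suc k < length ts \<and> ts ! k \<le> x}"
  have fin: "finite K" unfolding K_def by (rule finite_subset[of _ "{..<length ts}"]) auto
  have "0 \<in> K" unfolding K_def using len assms(2) by auto
  then have "Max K \<in> K" using fin by (intro Max_in) auto
  then have k: "Suc (Max K) < length ts" "ts ! Max K \<le> x" unfolding K_def by auto
  have "x \<le> ts ! Suc (Max K)"
  proof (cases "Suc (Suc (Max K)) < length ts")
    case True
    have "Suc (Max K) \<notin> K" using Max_ge[OF fin, of "Suc (Max K)"] by auto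
    with True show ?thesis unfolding K_def by auto
  next
    case False
    then have "Suc (Max K) = length ts - 1" using k(1) by simp
    then have "ts ! Suc (Max K) = last ts" using assms(1) by (simp add: last_conv_nth)
    then show ?thesis using assms(2) by simp
  qed
  with k len show ?thesis by (auto simp: seg_def intro!: exI[of _ "Max K"])
qed

lemma (in finite_borel_measure) exists_charged_seg:
  assumes "ts \<noteq> []" "measure tau {ts ! 0 .. last ts} \<noteq> 0"
  shows "\<exists>k<length ts. (1 < length ts \<longrightarrow> Suc k < length ts) \<and> 0 < measure tau (seg ts k)"
proof (rule ccontr)
  let ?I = "{k. k < length ts \<and> (1 < length ts \<longrightarrow> Suc k < length ts)}"
  assume none: "\<not> ?thesis"
  have null: "measure tau (seg ts k) = 0" if "k \<in> ?I" for k
  proof -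
    from none that have "\<not> 0 < measure tau (seg ts k)" by auto
    then show ?thesis using measure_nonneg[of tau "seg ts k"] by linarith
  qed
  have "{ts ! 0 .. last ts} \<subseteq> (\<Union>k\<in>?I. seg ts k)"
    using seg_cover[OF assms(1)] by blast
  then have "measure tau {ts ! 0 .. last ts} \<le> measure tau (\<Union>k\<in>?I. seg ts k)"
    by (intro finite_measure_mono) auto
  also have "\<dots> \<le> (\<Sum>k\<in>?I. measure tau (seg ts k))"
    by (intro finite_measure_subadditive_finite) auto
  also have "\<dots> = 0" using null by simp
  finally show False using assms(2) measure_nonneg[of tau "{ts ! 0 .. last ts}"] by linarith
qed

text \<open>Index of the first segment of positive mass (the \<open>n\<close> of step (4)), or \<open>length ts\<close>
  if there is none, so that the value is never junk.\<close>
definition first_charged_seg :: "real list \<Rightarrow> real measure \<Rightarrow> nat" where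
  "first_charged_seg ts tau =
     (if \<exists>k<length ts. 0 < measure tau (seg ts k)
      then LEAST k. k < length ts \<and> 0 < measure tau (seg ts k) else length ts)"

lemma first_charged_seg_le_length: "first_charged_seg ts tau \<le> length ts"
proof (cases "\<exists>k<length ts. 0 < measure tau (seg ts k)")
  case True
  then obtain k where k: "k < length ts \<and> 0 < measure tau (seg ts k)" by blast
  then have "(LEAST k. k < length ts \<and> 0 < measure tau (seg ts k)) \<le> k" by (rule Least_le)
  with k True show ?thesis by (simp add: first_charged_seg_def)
qed (auto simp: first_charged_seg_def)

lemma measure_seg_before_first_charged:
  assumes "k < first_charged_seg ts tau" shows "measure tau (seg ts k) = 0"
proof -
  have "\<not> (k < length ts \<and> 0 < measure tau (seg ts k))"
  proof (cases "\<exists>k<length ts. 0 < measure tau (seg ts k)")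
    case True
    then show ?thesis using assms not_less_Least by (auto simp: first_charged_seg_def)
  qed (use assms in \<open>auto simp: first_charged_seg_def\<close>)
  moreover have "k < length ts"
    using assms first_charged_seg_le_length[of ts tau] by linarith
  ultimately show ?thesis using measure_nonneg[of tau "seg ts k"] by linarith
qed

lemma first_charged_seg_eqI:
  assumes "n < length ts" "0 < measure tau (seg ts n)" "\<And>k. k < n \<Longrightarrow> measure tau (seg ts k) = 0"
  shows "first_charged_seg ts tau = n"
proof -
  have "(LEAST k. k < length ts \<and> 0 < measure tau (seg ts k)) = n"
  proof (rule Least_equality)
    show "\<And>k. k < length ts \<and> 0 < measure tau (seg ts k) \<Longrightarrow> n \<le> k"
      using assms(3) by (metis less_irrefl not_le)
  qed (use assms in auto)
  with assms(1,2) show ?thesis by (auto simp: first_charged_seg_def)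
qed

lemma first_charged_seg_gtI:
  assumes "n < length ts" "\<And>k. k \<le> n \<Longrightarrow> measure tau (seg ts k) = 0"
  shows "n < first_charged_seg ts tau"
proof (cases "\<exists>k<length ts. 0 < measure tau (seg ts k)")
  case True
  define l where "l = (LEAST k. k < length ts \<and> 0 < measure tau (seg ts k))"
  have "0 < measure tau (seg ts l)"
    unfolding l_def using LeastI_ex[of "\<lambda>k. k < length ts \<and> 0 < measure tau (seg ts k)"] True by blast
  then have "n < l" using assms(2)[of l] by (cases "l \<le> n") auto
  with True show ?thesis by (simp add: first_charged_seg_def l_def)
qed (use assms(1) in \<open>auto simp: first_charged_seg_def\<close>)

lemma sorted_wrt_del_at: "sorted_wrt P xs \<Longrightarrow> sorted_wrt P (del_at k xs)"
proof -
  assume sorted: "sorted_wrt P xs"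
  then have "sorted_wrt P (take (Suc k) xs @ drop (Suc k) xs)" by simp
  then have "\<forall>x\<in>set (take (Suc k) xs). \<forall>y\<in>set (drop (Suc k) xs). P x y"
    by (simp only: sorted_wrt_append) blast
  moreover have "set (take k xs) \<subseteq> set (take (Suc k) xs)" by (rule set_take_subset_set_take) simp
  ultimately show ?thesis unfolding del_at_def using sorted
    by (auto simp: sorted_wrt_append sorted_wrt_take sorted_wrt_drop)
qed

lemma set_del_at: "set (del_at k xs) \<subseteq> set xs"
  unfolding del_at_def using set_take_subset set_drop_subset by fastforce

lemma length_del_at: "k < length xs \<Longrightarrow> length (del_at k xs) = length xs - 1"
  unfolding del_at_def by simp

lemma feas_terminates_None: "feas_next s = None \<Longrightarrow> feas_terminates s"
  unfolding feas_terminates_def by (rule exI[of _ 1]) simp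

lemma feas_terminates_Some:
  assumes "feas_next s = Some s'" "feas_terminates s'"
  shows "feas_terminates s"
proof -
  obtain k where "((\<lambda>x. Option.bind x feas_next) ^^ k) (Some s') = None"
    using assms(2) unfolding feas_terminates_def by blast
  then have "((\<lambda>x. Option.bind x feas_next) ^^ Suc k) (Some s) = None"
    unfolding funpow_Suc_right o_apply using assms(1) by simp
  then show ?thesis unfolding feas_terminates_def by blast
qed

definition feas_inv :: "feas_state \<Rightarrow> bool" where
  "feas_inv s \<longleftrightarrow> (case s of (qs, ts, tau) \<Rightarrow>
     length qs = length ts \<and> sorted_wrt (<) ts \<and> (\<forall>q\<in>set qs. 0 \<le> q) \<and> finite_borel_measure tau)"

definition transfer_pending :: "feas_state \<Rightarrow> bool" where
  "transfer_pending s \<longleftrightarrow> (case s of (qs, ts, tau) \<Rightarrow>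
     let n = first_charged_seg ts tau in Suc n < length ts \<and> qs ! 0 \<noteq> 0 \<and> qs ! Suc n \<noteq> 0)"

definition feas_order :: "(feas_state \<times> feas_state) set" where
  "feas_order = measures
     [\<lambda>(qs, ts, tau). length ts,
      \<lambda>(qs, ts, tau). length ts - first_charged_seg ts tau,
      \<lambda>s. of_bool (transfer_pending s)]"

lemma wf_feas_order: "wf feas_order"
  unfolding feas_order_def by (rule wf_measures)

lemma feas_order_shorter: "length ts' < length ts \<Longrightarrow> ((qs', ts', tau'), (qs, ts, tau)) \<in> feas_order"
  by (simp add: feas_order_def)

lemma feas_order_transfer:
  assumes first: "first_charged_seg ts tau = n" and n: "Suc n < length ts" "qs ! 0 \<noteq> 0" "qs ! Suc n \<noteq> 0"
    and le: "\<And>k. measure tau' (seg ts k) \<le> measure tau (seg ts k)"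
    and progress: "measure tau' (seg ts n) = 0 \<or> qs' ! 0 = 0 \<or> qs' ! Suc n = 0"
  shows "((qs', ts, tau'), (qs, ts, tau)) \<in> feas_order"
proof -
  have before: "measure tau' (seg ts k) = 0" if "k < n" for k
    using le[of k] measure_seg_before_first_charged[of k ts tau] first that
      measure_nonneg[of tau' "seg ts k"] by simp
  show ?thesis
  proof (cases "measure tau' (seg ts n) = 0")
    case True
    then have "n < first_charged_seg ts tau'"
      using before n(1) by (intro first_charged_seg_gtI) (auto simp: le_less)
    then have "length ts - first_charged_seg ts tau' < length ts - first_charged_seg ts tau"
      using first n(1) first_charged_seg_le_length[of ts tau'] by linarith
    then show ?thesis by (simp add: feas_order_def)
  next
    case False
    then have "0 < measure tau' (seg ts n)" using measure_nonneg[of tau' "seg ts n"] by linarith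
    then have "first_charged_seg ts tau' = n"
      using before n(1) by (intro first_charged_seg_eqI) auto
    then show ?thesis
      using first n progress False by (simp add: feas_order_def transfer_pending_def)
  qed
qed

lemma feas_next_SomeD:
  "feas_next (qs, ts, tau) = Some s' \<Longrightarrow> ts \<noteq> [] \<and> measure tau {ts ! 0 .. last ts} \<noteq> 0"
  by (auto simp: feas_next_def split: if_splits)

lemma feas_next_SomeE:
  assumes "feas_next (qs, ts, tau) = Some s'"
  defines "n \<equiv> LEAST k. k < length ts \<and> 0 < measure tau (seg ts k)"
  defines "J1 \<equiv> \<lambda>m. \<integral>t. (ts ! Suc n - t) / (ts ! Suc n - ts ! 0) \<partial>tau_trunc tau (ts ! n) m"
    and "J2 \<equiv> \<lambda>m. \<integral>t. (t - ts ! 0) / (ts ! Suc n - ts ! 0) \<partial>tau_trunc tau (ts ! n) m"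
    and "M \<equiv> measure tau {ts ! n .. ts ! Suc n}"
  defines "Mm \<equiv> min (Sup {m. 0 \<le> m \<and> m \<le> M \<and> J1 m < qs ! 0})
                     (Sup {m. 0 \<le> m \<and> m \<le> M \<and> J2 m < qs ! Suc n})"
  obtains (drop_first) "qs ! 0 = 0" "s' = (tl qs, tl ts, tau)"
  | (drop_next) "qs ! 0 \<noteq> 0" "1 < length ts" "Suc n < length ts \<longrightarrow> qs ! Suc n = 0"
      "s' = (del_at (Suc n) qs, del_at (Suc n) ts, tau)"
  | (transfer) "qs ! 0 \<noteq> 0" "Suc n < length ts" "qs ! Suc n \<noteq> 0"
      "s' = (qs[0 := qs ! 0 - J1 Mm, Suc n := qs ! Suc n - J2 Mm], ts,
             meas_diff tau (tau_trunc tau (ts ! n) Mm))"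
proof -
  have "\<not> 0 < emeasure tau {..< ts ! 0}"
    using assms(1) by (rule contrapos_pn) (simp add: feas_next_def)
  with feas_next_SomeD[OF assms(1)] have "feas_next (qs, ts, tau) =
    (if qs ! 0 = 0 then Some (tl qs, tl ts, tau)
     else if (if Suc n < length ts then qs ! Suc n else 0) = 0 \<and> 1 < length ts
       then Some (del_at (Suc n) qs, del_at (Suc n) ts, tau)
     else if Suc n < length ts
       then Some (qs[0 := qs ! 0 - J1 Mm, Suc n := qs ! Suc n - J2 Mm], ts,
                  meas_diff tau (tau_trunc tau (ts ! n) Mm))
     else None)"
    unfolding feas_next_def Let_def n_def J1_def J2_def M_def Mm_def by simp
  with assms(1) show thesis
    using drop_first drop_next transfer by (auto split: if_splits)
qed

lemma feas_next_transfer_decreases: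
  assumes inv: "feas_inv (qs, ts, tau)" and first: "first_charged_seg ts tau = n"
    and n: "Suc n < length ts" "qs ! 0 \<noteq> 0" "qs ! Suc n \<noteq> 0"
  defines "J1 \<equiv> \<lambda>m. \<integral>t. (ts ! Suc n - t) / (ts ! Suc n - ts ! 0) \<partial>tau_trunc tau (ts ! n) m"
    and "J2 \<equiv> \<lambda>m. \<integral>t. (t - ts ! 0) / (ts ! Suc n - ts ! 0) \<partial>tau_trunc tau (ts ! n) m"
    and "M \<equiv> measure tau {ts ! n .. ts ! Suc n}"
  defines "Mm \<equiv> min (Sup {m. 0 \<le> m \<and> m \<le> M \<and> J1 m < qs ! 0})
                     (Sup {m. 0 \<le> m \<and> m \<le> M \<and> J2 m < qs ! Suc n})"
  defines "qs' \<equiv> qs[0 := qs ! 0 - J1 Mm, Suc n := qs ! Suc n - J2 Mm]"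
    and "tau' \<equiv> meas_diff tau (tau_trunc tau (ts ! n) Mm)"
  shows "feas_inv (qs', ts, tau') \<and> ((qs', ts, tau'), (qs, ts, tau)) \<in> feas_order"
proof -
  from inv have len: "length qs = length ts" and sorted: "sorted_wrt (<) ts"
    and nonneg: "\<forall>q\<in>set qs. 0 \<le> q" and "finite_borel_measure tau"
    by (auto simp: feas_inv_def)
  interpret finite_borel_measure tau by fact
  have t: "ts ! 0 \<le> ts ! n" "ts ! n < ts ! Suc n"
    using n(1) sorted by (cases "n = 0", auto simp: sorted_wrt_iff_nth_less intro!: less_imp_le)
  have "qs ! 0 \<in> set qs" "qs ! Suc n \<in> set qs" using n(1) len by (auto intro!: nth_mem)
  with nonneg n(2,3) have q: "0 < qs ! 0" "0 < qs ! Suc n" by (auto simp: le_less)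
  have step: "0 \<le> Mm" "J1 Mm \<le> qs ! 0" "J2 Mm \<le> qs ! Suc n"
    "measure tau' {ts ! n .. ts ! Suc n} = 0 \<or> J1 Mm = qs ! 0 \<or> J2 Mm = qs ! Suc n"
    unfolding tau'_def Mm_def M_def J1_def J2_def by (fact transfer_step[OF t q])+
  have "finite_borel_measure tau'"
    unfolding tau'_def by (rule finite_borel_measure_meas_diff_tau_trunc[OF step(1)])
  moreover have "\<forall>q\<in>set qs'. 0 \<le> q"
  proof -
    have "set qs' \<subseteq> insert (qs ! Suc n - J2 Mm) (insert (qs ! 0 - J1 Mm) (set qs))"
      unfolding qs'_def by (meson insert_mono order_trans set_update_subset_insert)
    then show ?thesis using nonneg step(2,3) by auto
  qed
  moreover have "((qs', ts, tau'), (qs, ts, tau)) \<in> feas_order"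
  proof (rule feas_order_transfer[OF first n])
    show "measure tau' (seg ts k) \<le> measure tau (seg ts k)" for k
      unfolding tau'_def by (rule measure_meas_diff_tau_trunc_le[OF step(1) seg_borel])
    have "seg ts n = {ts ! n .. ts ! Suc n}" using n(1) by (simp add: seg_def)
    moreover have "0 < length qs" "Suc n < length qs" using n(1) len by linarith+
    then have "qs' ! 0 = qs ! 0 - J1 Mm" "qs' ! Suc n = qs ! Suc n - J2 Mm"
      by (simp_all add: qs'_def)
    ultimately show "measure tau' (seg ts n) = 0 \<or> qs' ! 0 = 0 \<or> qs' ! Suc n = 0"
      using step(4) by auto
  qed
  ultimately show ?thesis using len sorted by (simp add: feas_inv_def qs'_def)
qed

lemma feas_next_decreases:
  assumes inv: "feas_inv s" and step: "feas_next s = Some s'"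
  shows "feas_inv s' \<and> (s', s) \<in> feas_order"
proof -
  obtain qs ts tau where s: "s = (qs, ts, tau)" by (cases s)
  from inv s have len: "length qs = length ts" and sorted: "sorted_wrt (<) ts"
    and nonneg: "\<forall>q\<in>set qs. 0 \<le> q" and "finite_borel_measure tau"
    by (auto simp: feas_inv_def)
  interpret finite_borel_measure tau by fact
  from step s have ne: "ts \<noteq> []" and charged: "measure tau {ts ! 0 .. last ts} \<noteq> 0"
    using feas_next_SomeD by auto
  define n where "n = (LEAST k. k < length ts \<and> 0 < measure tau (seg ts k))"
  obtain w where w: "w < length ts" "1 < length ts \<longrightarrow> Suc w < length ts" "0 < measure tau (seg ts w)"
    using exists_charged_seg[OF ne charged] by blast
  then have first: "first_charged_seg ts tau = n"
    by (auto simp: first_charged_seg_def n_def)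
  have "n \<le> w" unfolding n_def using w by (intro Least_le) simp
  with w have last_seg: "1 < length ts \<Longrightarrow> Suc n < length ts" by simp
  from step[unfolded s] show ?thesis
  proof (cases rule: feas_next_SomeE)
    case drop_first
    then show ?thesis
      using ne len sorted nonneg \<open>finite_borel_measure tau\<close>
      by (cases qs; cases ts) (auto simp: s feas_inv_def feas_order_def)
  next
    case drop_next
    with last_seg have "Suc n < length ts" by (simp add: n_def)
    then show ?thesis
      using drop_next len sorted nonneg set_del_at[of "Suc n" qs] \<open>finite_borel_measure tau\<close>
      by (auto simp: s n_def feas_inv_def length_del_at sorted_wrt_del_at intro!: feas_order_shorter)
  next
    case transfer
    with feas_next_transfer_decreases[OF inv[unfolded s] first] show ?thesis
      unfolding s n_def by simp
  qed
qed

lemma feas_terminates_if_inv: "feas_inv s \<Longrightarrow> feas_terminates s"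
proof (induction s rule: wf_induct[OF wf_feas_order])
  case (1 s)
  show ?case
  proof (cases "feas_next s")
    case None
    then show ?thesis by (rule feas_terminates_None)
  next
    case (Some s')
    with feas_next_decreases[OF "1.prems" Some] "1.IH" show ?thesis
      by (blast intro: feas_terminates_Some)
  qed
qed

theorem proposition3:
  fixes qs ts :: "real list" and Di :: "'a measure" and T :: "'a \<Rightarrow> real"
  assumes "length qs = length ts"
    and "sorted_wrt (<) ts"
    and "\<forall>q\<in>set qs. 0 \<le> q"
    and "emeasure Di (space Di) = ennreal (\<Sum>k<length qs. qs ! k)"
    and "T \<in> borel_measurable Di"
    and "\<forall>i\<in>space Di. T i \<in> {ts ! 0 .. last ts}"
    and "integral\<^sup>L Di T = (\<Sum>k<length qs. qs ! k * ts ! k)"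
  shows "feas_terminates (qs, ts, distr Di borel T)"
proof (rule feas_terminates_if_inv)
  have "finite_measure (distr Di borel T)"
    using assms(4,5) by (intro finite_measureI) (simp add: emeasure_distr)
  then have "finite_borel_measure (distr Di borel T)"
    by (simp add: finite_borel_measure_def finite_borel_measure_axioms_def)
  with assms(1-3) show "feas_inv (qs, ts, distr Di borel T)"
    by (simp add: feas_inv_def)
qed

end
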